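(* Let $\Phi:(0,\infty)\to\mathbb C$ be measurable, let $c\in(-1,0)$, assume $D_0:=\int_0^\infty \Phi(y)\,y^{-1}\,dy$ is finite and nonzero, and assume $$\int_0^\infty|\Phi(y)|\,y^{-c-1}\,dy<\infty.$$ Let $F(s)=\int_0^\infty y^{s-1}\Phi(y)\,dy$ wherever absolutely convergent, let $\mathcal K(s)=-\frac{\pi}{2}\frac{\Gamma(s+1)}{\sin(\pi s/2)}$, let $\Xi(z)=z\int_0^\infty\frac{e^{-zt}}{1+t^2}dt$ ($z>0$), and $S(\mu)=\frac1{D_0}\int_0^\infty\frac{\Phi(y)}{y}\Xi(\mu y)\,dy$. Then $F(-s)$ converges absolutely on the line $\Re s=c$, the integral $\int_{(c)}\mathcal K(s)F(-s)\mu^{-s}\,ds$ converges absolutely for every $\mu>0$, and $$S(\mu)=\frac{1}{2\pi i D_0}\int_{(c)}\mathcal K(s)F(-s)\mu^{-s}\,ds\qquad(\mu>0).$$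
   Context: $\int_{(c)}$ denotes integration upward along the vertical line $\Re s=c$. *)

theory Defs
  imports "HOL-Analysis.Analysis"
begin

definition mellin_abs_conv :: "(real \<Rightarrow> complex) \<Rightarrow> complex \<Rightarrow> bool" where
  "mellin_abs_conv \<Phi> s \<longleftrightarrow>
     set_integrable lborel {0<..} (\<lambda>y. (complex_of_real y) powr (s - 1) * \<Phi> y)"

definition mellin :: "(real \<Rightarrow> complex) \<Rightarrow> complex \<Rightarrow> complex" where
  "mellin \<Phi> s = (LINT y:{0<..}|lborel. (complex_of_real y) powr (s - 1) * \<Phi> y)"

definition Kker :: "complex \<Rightarrow> complex" where
  "Kker s = - (of_real pi / 2) * Gamma (s + 1) / sin (of_real pi * s / 2)"

definition Xi :: "real \<Rightarrow> real" where
  "Xi z = z * (LBINT t:{0<..}. exp (- z * t) / (1 + t\<^sup>2))"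

definition D0 :: "(real \<Rightarrow> complex) \<Rightarrow> complex" where
  "D0 \<Phi> = (LINT y:{0<..}|lborel. \<Phi> y / complex_of_real y)"

definition Sfun :: "(real \<Rightarrow> complex) \<Rightarrow> real \<Rightarrow> complex" where
  "Sfun \<Phi> \<mu> = (1 / D0 \<Phi>) *
     (LINT y:{0<..}|lborel. \<Phi> y / complex_of_real y * complex_of_real (Xi (\<mu> * y)))"

text \<open>Integration upward along the vertical line Re s = c, parametrised s = c + i t,
  ds = i dt: absolute convergence and value.\<close>
definition vline_integrable :: "(complex \<Rightarrow> complex) \<Rightarrow> real \<Rightarrow> bool" where
  "vline_integrable g c \<longleftrightarrow> integrable lborel (\<lambda>t. g (Complex c t))"

definition vline_integral :: "(complex \<Rightarrow> complex) \<Rightarrow> real \<Rightarrow> complex" where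
  "vline_integral g c = \<i> * (\<integral>t. g (Complex c t) \<partial>lborel)"

end

theory Submission
  imports Defs "HOL-Probability.Levy"
begin

text \<open>
  Writing Xi(z) = z * int_0^oo exp(-z t)/(1+t^2) dt and integrating over z first turns the
  Mellin transform of Xi into Gamma(s+1) * int_0^oo t^(-s-1)/(1+t^2) dt; the substitution
  u = t^2, a second Fubini argument with the Gamma integral and Euler's reflection formula
  identify this with K(s) on the strip -1 < Re s < 0.

  Mellin inversion on the line Re s = c is derived from Levy's inversion theorem: if Z has
  density proportional to z^(c-1) f(z) with f >= 0, then the characteristic function of ln Z
  is, up to normalisation, the Mellin transform of f on that line. Levy's theorem therefore
  determines the integrals of z^(c-1) f over all compact intervals, and continuity gives
  f(z) = (2 pi i)^-1 int_(c) F(s) z^-s ds. For f = Xi this says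
  Xi(z) = (2 pi i)^-1 int_(c) K(s) z^-s ds.

  Finally, inserting F(-s) = int_0^oo y^(-s-1) Phi(y) dy into the line integral and exchanging
  the two integrations, which is justified by the exponential decay of K on vertical lines and
  the moment condition on Phi, turns the line integral into 2 pi i int_0^oo Phi(y)/y Xi(mu y) dy.
\<close>

section \<open>Integrals over the half-line\<close>

lemma norm_of_real_powr: "0 \<le> x \<Longrightarrow> norm (complex_of_real x powr s) = x powr Re s"
  by (simp add: norm_powr_real_powr)

lemma of_real_powr_eq_exp_ln: "0 < x \<Longrightarrow> complex_of_real x powr s = exp (s * of_real (ln x))"
  by (simp add: powr_def Ln_of_real)

lemma of_real_powr_measurable [measurable]:
  assumes [measurable]: "f \<in> borel_measurable M" "g \<in> borel_measurable M"
  shows "(\<lambda>x. complex_of_real (f x) powr g x) \<in> borel_measurable M"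
proof -
  have "(\<lambda>x. complex_of_real (f x) powr g x) = (\<lambda>x. if f x = 0 then 0
      else exp (g x * (of_real (ln \<bar>f x\<bar>) + (if f x < 0 then pi else 0) * \<i>)))"
    by (rule ext) (simp add: powr_def Ln_of_real')
  also have "\<dots> \<in> borel_measurable M" by measurable
  finally show ?thesis .
qed

lemma Complex_measurable [measurable]:
  assumes [measurable]: "f \<in> borel_measurable M" "g \<in> borel_measurable M"
  shows "(\<lambda>x. Complex (f x) (g x)) \<in> borel_measurable M"
proof -
  have "(\<lambda>x. Complex (f x) (g x)) = (\<lambda>x. of_real (f x) + \<i> * of_real (g x))"
    by (simp add: fun_eq_iff complex_eq_iff)
  then show ?thesis
    by simp
qed

lemma powr_le_add_powr_endpoints:
  fixes a b z e :: real
  assumes "0 < a" "a \<le> z" "z \<le> b"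
  shows "z powr e \<le> a powr e + b powr e"
proof (cases "0 \<le> e")
  case True
  then have "z powr e \<le> b powr e"
    using assms by (intro powr_mono2) auto
  then show ?thesis
    by (simp add: add_increasing)
next
  case False
  then have "z powr e \<le> a powr e"
    using assms by (intro powr_mono2') auto
  then show ?thesis
    by (simp add: add_increasing2)
qed

lemma set_integrable_lborel_if_lebesgue:
  fixes f :: "real \<Rightarrow> 'b::{banach,second_countable_topology}"
  assumes "set_integrable lebesgue S f" "set_borel_measurable lborel S f"
  shows "set_integrable lborel S f"
  using assms integrable_completion unfolding set_integrable_def set_borel_measurable_def by blast

lemma
  fixes w :: complex and r :: real
  assumes w: "0 < Re w" and r: "0 < r"
  shows set_integrable_Gamma_scaled:
      "set_integrable lborel {0<..} (\<lambda>u. of_real u powr (w - 1) * of_real (exp (- (r * u))))"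
    and set_integral_Gamma_scaled:
      "(LINT u:{0<..}|lborel. of_real u powr (w - 1) * of_real (exp (- (r * u)))) = Gamma w / of_real r powr w"
proof -
  define g where "g = (\<lambda>u::real. indicator {0<..} u *\<^sub>R (of_real u powr (w - 1) * of_real (exp (- u))))"
  have g_eq: "(\<lambda>u. of_real u powr (w - 1) / of_real (exp u)) = (\<lambda>u. of_real u powr (w - 1) * of_real (exp (- u)))"
    by (simp add: exp_minus field_simps)
  have int1: "set_integrable lborel {0<..} (\<lambda>u. of_real u powr (w - 1) * of_real (exp (- u)))"
    using absolutely_integrable_Gamma_integral'[OF w]
    by (intro set_integrable_lborel_if_lebesgue) (auto simp: g_eq set_borel_measurable_def)
  then have g_int: "integrable lborel g"
    by (simp add: g_def set_integrable_def)
  have "integral\<^sup>L lborel g = integral {0<..} (\<lambda>u. of_real u powr (w - 1) * of_real (exp (- u)))"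
    using set_borel_integral_eq_integral(2)[OF int1] by (simp add: g_def set_lebesgue_integral_def)
  also have "\<dots> = Gamma w"
    using Gamma_integral_complex'[OF w] by (simp add: g_eq integral_unique)
  finally have g_integral: "integral\<^sup>L lborel g = Gamma w" .
  have g_scaled: "g (r * u) = of_real r powr (w - 1) *
      (indicator {0<..} u *\<^sub>R (of_real u powr (w - 1) * of_real (exp (- (r * u)))))" for u
    using r by (cases "u > 0") (auto simp: g_def powr_times_real zero_less_mult_iff)
  have "integrable lborel (\<lambda>u. g (r * u))"
    using lborel_integrable_real_affine[OF g_int, of r 0] r by simp
  then have "integrable lborel (\<lambda>u. inverse (of_real r powr (w - 1)) * g (r * u))"
    by (rule integrable_mult_right)
  then show "set_integrable lborel {0<..} (\<lambda>u. of_real u powr (w - 1) * of_real (exp (- (r * u))))"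
    unfolding set_integrable_def g_scaled using r by (simp add: mult.assoc[symmetric])
  have "(\<integral>u. g (r * u) \<partial>lborel) = of_real r powr (w - 1) * (LINT u:{0<..}|lborel. of_real u powr (w - 1) * of_real (exp (- (r * u))))"
    unfolding g_scaled set_lebesgue_integral_def by (rule integral_mult_right_zero)
  then have "Gamma w = r *\<^sub>R (of_real r powr (w - 1) * (LINT u:{0<..}|lborel. of_real u powr (w - 1) * of_real (exp (- (r * u)))))"
    using lborel_integral_real_affine[of r g 0] r by (simp add: g_integral)
  also have "\<dots> = of_real r powr w * (LINT u:{0<..}|lborel. of_real u powr (w - 1) * of_real (exp (- (r * u))))"
    using r by (simp add: scaleR_conv_of_real powr_diff)
  finally show "(LINT u:{0<..}|lborel. of_real u powr (w - 1) * of_real (exp (- (r * u)))) = Gamma w / of_real r powr w"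
    using r by (simp add: field_simps)
qed

lemma set_integrable_complex_of_real_iff:
  "set_integrable M A (\<lambda>x. complex_of_real (f x)) \<longleftrightarrow> set_integrable M A f"
proof -
  have "(\<lambda>x. indicator A x *\<^sub>R complex_of_real (f x)) = (\<lambda>x. complex_of_real (indicator A x *\<^sub>R f x))"
    by (auto simp: indicator_def)
  then show ?thesis
    unfolding set_integrable_def by (simp only: complex_of_real_integrable_eq)
qed

lemma
  fixes \<sigma> r :: real
  assumes \<sigma>: "0 < \<sigma>" and r: "0 < r"
  shows set_integrable_Gamma_scaled_real: "set_integrable lborel {0<..} (\<lambda>u. u powr (\<sigma> - 1) * exp (- (r * u)))"
    and set_integral_Gamma_scaled_real: "(LBINT u:{0<..}. u powr (\<sigma> - 1) * exp (- (r * u))) = Gamma \<sigma> / r powr \<sigma>"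
proof -
  have of_real_eq: "of_real u powr (of_real \<sigma> - 1) * complex_of_real (exp (- (r * u)))
      = complex_of_real (u powr (\<sigma> - 1) * exp (- (r * u)))" if "u \<in> {0<..}" for u
    using that powr_of_real[of u "\<sigma> - 1"] by simp
  have "set_integrable lborel {0<..} (\<lambda>u. complex_of_real (u powr (\<sigma> - 1) * exp (- (r * u))))"
    using set_integrable_Gamma_scaled[of "of_real \<sigma>" r] \<sigma> r
    by (subst set_integrable_cong[OF refl refl of_real_eq, symmetric]) simp_all
  then show "set_integrable lborel {0<..} (\<lambda>u. u powr (\<sigma> - 1) * exp (- (r * u)))"
    by (simp only: set_integrable_complex_of_real_iff)
  have "complex_of_real (LBINT u:{0<..}. u powr (\<sigma> - 1) * exp (- (r * u)))
      = (LINT u:{0<..}|lborel. of_real u powr (of_real \<sigma> - 1) * complex_of_real (exp (- (r * u))))"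
    by (simp add: set_lebesgue_integral_cong of_real_eq flip: set_integral_complex_of_real)
  also have "\<dots> = complex_of_real (Gamma \<sigma> / r powr \<sigma>)"
    using set_integral_Gamma_scaled[of "of_real \<sigma>" r] \<sigma> r
    by (simp add: Gamma_complex_of_real powr_of_real)
  finally show "(LBINT u:{0<..}. u powr (\<sigma> - 1) * exp (- (r * u))) = Gamma \<sigma> / r powr \<sigma>"
    by (simp only: of_real_eq_iff)
qed

lemma
  fixes f :: "real \<Rightarrow> real \<Rightarrow> 'a::{banach,second_countable_topology}"
  assumes meas: "(\<lambda>(x, y). indicator (A \<times> B) (x, y) *\<^sub>R f x y) \<in> borel_measurable (lborel \<Otimes>\<^sub>M lborel)"
    and inner: "\<And>x. x \<in> A \<Longrightarrow> set_integrable lborel B (f x)"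
    and outer: "set_integrable lborel A (\<lambda>x. LBINT y:B. norm (f x y))"
  shows Fubini_set_integrable_fst: "set_integrable lborel A (\<lambda>x. LINT y:B|lborel. f x y)"
    and Fubini_set_integrable_snd: "set_integrable lborel B (\<lambda>y. LINT x:A|lborel. f x y)"
    and Fubini_set_integral: "(LINT y:B|lborel. LINT x:A|lborel. f x y) = (LINT x:A|lborel. LINT y:B|lborel. f x y)"
proof -
  define F where "F x y = indicator A x *\<^sub>R indicator B y *\<^sub>R f x y" for x y
  have F_int: "integrable (lborel \<Otimes>\<^sub>M lborel) (\<lambda>(x, y). F x y)"
  proof (rule lborel_pair.Fubini_integrable)
    show "(\<lambda>(x, y). F x y) \<in> borel_measurable (lborel \<Otimes>\<^sub>M lborel)"
      using meas by (simp add: F_def indicator_times case_prod_beta)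
    have "(\<lambda>x. LBINT y. norm (F x y)) = (\<lambda>x. indicator A x *\<^sub>R (LBINT y:B. norm (f x y)))"
      by (auto simp: F_def set_lebesgue_integral_def indicator_def fun_eq_iff)
    then show "integrable lborel (\<lambda>x. LBINT y. norm (case (x, y) of (x, y) \<Rightarrow> F x y))"
      using outer by (simp add: set_integrable_def)
    show "AE x in lborel. integrable lborel (\<lambda>y. case (x, y) of (x, y) \<Rightarrow> F x y)"
      using inner by (intro AE_I2) (auto simp: F_def set_integrable_def indicator_def)
  qed
  have F_fst: "(LBINT y. F x y) = indicator A x *\<^sub>R (LINT y:B|lborel. f x y)" for x
    by (auto simp: F_def set_lebesgue_integral_def indicator_def)
  have F_snd: "(LBINT x. F x y) = indicator B y *\<^sub>R (LINT x:A|lborel. f x y)" for y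
    by (auto simp: F_def set_lebesgue_integral_def indicator_def)
  show "set_integrable lborel A (\<lambda>x. LINT y:B|lborel. f x y)"
    using lborel_pair.integrable_fst[OF F_int] by (simp add: F_fst set_integrable_def)
  show "set_integrable lborel B (\<lambda>y. LINT x:A|lborel. f x y)"
    using lborel_pair.integrable_snd[OF F_int] by (simp add: F_snd set_integrable_def)
  show "(LINT y:B|lborel. LINT x:A|lborel. f x y) = (LINT x:A|lborel. LINT y:B|lborel. f x y)"
    using lborel_pair.Fubini_integral[OF F_int] by (simp add: F_fst F_snd set_lebesgue_integral_def)
qed

lemma
  fixes a :: real
  assumes a: "0 < a"
  shows set_integrable_exp_neg: "set_integrable lborel {0<..} (\<lambda>r. exp (- (a * r)))"
    and set_integral_exp_neg: "(LBINT r:{0<..}. exp (- (a * r))) = 1 / a"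
proof -
  have eq: "r powr (1 - 1) * exp (- (a * r)) = exp (- (a * r))" if "r \<in> {0<..}" for r
    using that by simp
  show "set_integrable lborel {0<..} (\<lambda>r. exp (- (a * r)))"
    using set_integrable_Gamma_scaled_real[OF zero_less_one a]
    by (rule set_integrable_cong[THEN iffD1, OF refl refl, rotated]) (simp_all add: eq)
  have "(LBINT r:{0<..}. exp (- (a * r))) = (LBINT r:{0<..}. r powr (1 - 1) * exp (- (a * r)))"
    by (rule set_lebesgue_integral_cong) (simp_all add: eq)
  then show "(LBINT r:{0<..}. exp (- (a * r))) = 1 / a"
    using set_integral_Gamma_scaled_real[OF zero_less_one a] a by simp
qed

lemma einterval_0_infinity: "einterval 0 \<infinity> = {0::real<..}"
  by (simp add: zero_ereal_def)

lemma set_integrable_substitution_square: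
  fixes f :: "real \<Rightarrow> 'a::euclidean_space"
  assumes cont: "continuous_on {0<..} f" and int: "set_integrable lborel {0<..} f"
  shows "set_integrable lborel {0<..} (\<lambda>t. (2 * t) *\<^sub>R f (t\<^sup>2))"
proof -
  have isCont_f: "isCont f x" if "0 < x" for x
    using cont that by (simp add: continuous_on_eq_continuous_at)
  have isCont_f_square: "isCont (\<lambda>t. f (t\<^sup>2)) y" if "0 < y" for y
    using that by (intro isCont_o2[where f = "\<lambda>t. t\<^sup>2" and g = f] isCont_f) auto
  have "set_integrable lborel (einterval 0 \<infinity>) (\<lambda>t. norm (f (t\<^sup>2)) * (2 * t))"
  proof (rule interval_integral_substitution_nonneg(1)
      [where g = sqrt and g' = "\<lambda>x. inverse (sqrt x) / 2" and a = 0 and b = \<infinity>])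
    show "DERIV sqrt x :> inverse (sqrt x) / 2" if "0 < ereal x" for x
      using that by (intro DERIV_real_sqrt) (simp add: zero_ereal_def)
    show "isCont (\<lambda>t. norm (f (t\<^sup>2)) * (2 * t)) (sqrt x)" if "0 < ereal x" for x
      using that by (intro continuous_intros isCont_f_square) (simp add: zero_ereal_def)
    show "isCont (\<lambda>x. inverse (sqrt x) / 2) x" if "0 < ereal x" for x
      using that by (intro continuous_intros) (auto simp: zero_ereal_def)
    show "0 \<le> inverse (sqrt x) / 2" if "0 \<le> ereal x" for x
      using that by (simp add: zero_ereal_def)
    show "((ereal \<circ> sqrt \<circ> real_of_ereal) \<longlongrightarrow> 0) (at_right 0)"
      unfolding zero_ereal_def comp_assoc[symmetric] ereal_tendsto_simps
      by (auto intro!: tendsto_eq_intros tendsto_real_sqrt intro: tendsto_within_subset)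
    show "((ereal \<circ> sqrt \<circ> real_of_ereal) \<longlongrightarrow> \<infinity>) (at_left \<infinity>)"
      unfolding comp_assoc[symmetric] ereal_tendsto_simps by (rule sqrt_at_top)
    have norm_eq: "norm (f ((sqrt x)\<^sup>2)) * (2 * sqrt x) * (inverse (sqrt x) / 2) = norm (f x)" if "0 < x" for x
      using that by simp
    show "set_integrable lborel (einterval 0 \<infinity>)
        (\<lambda>x. norm (f ((sqrt x)\<^sup>2)) * (2 * sqrt x) * (inverse (sqrt x) / 2))"
      using set_integrable_norm[OF int] unfolding einterval_0_infinity
      by (rule set_integrable_cong[THEN iffD1, OF refl refl, rotated]) (simp add: norm_eq)
  qed (simp_all add: zero_ereal_def)
  then have "set_integrable lborel {0<..} (\<lambda>t. norm ((2 * t) *\<^sub>R f (t\<^sup>2)))"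
    unfolding einterval_0_infinity
    by (rule set_integrable_cong[THEN iffD1, OF refl refl, rotated]) (simp add: mult.commute)
  moreover have "set_borel_measurable lborel {0<..} (\<lambda>t. (2 * t) *\<^sub>R f (t\<^sup>2))"
    unfolding set_borel_measurable_def measurable_lborel2
    by (intro borel_measurable_continuous_on_indicator continuous_intros
        continuous_on_compose2[OF cont]) auto
  ultimately show ?thesis
    by (rule set_integrable_bound) (simp_all add: AE_I2)
qed

lemma set_integral_substitution_square:
  fixes f :: "real \<Rightarrow> 'a::euclidean_space"
  assumes cont: "continuous_on {0<..} f" and int: "set_integrable lborel {0<..} f"
  shows "(LINT t:{0<..}|lborel. (2 * t) *\<^sub>R f (t\<^sup>2)) = (LINT u:{0<..}|lborel. f u)"
proof -
  have "(LBINT x=0..\<infinity>. f x) = (LBINT x=0..\<infinity>. (2 * x) *\<^sub>R f (x\<^sup>2))"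
  proof (rule interval_integral_substitution_integrable[where g = "\<lambda>x. x\<^sup>2" and g' = "\<lambda>x. 2 * x"])
    show "DERIV (\<lambda>x. x\<^sup>2) x :> 2 * x" for x :: real
      by (auto intro!: derivative_eq_intros)
    show "isCont f (x\<^sup>2)" if "0 < ereal x" for x
      using cont that by (simp add: continuous_on_eq_continuous_at zero_ereal_def)
    show "0 \<le> 2 * x" if "0 \<le> ereal x" for x
      using that by (simp add: zero_ereal_def)
    show "((ereal \<circ> (\<lambda>x. x\<^sup>2) \<circ> real_of_ereal) \<longlongrightarrow> 0) (at_right 0)"
      unfolding zero_ereal_def comp_assoc[symmetric] ereal_tendsto_simps
      by (auto intro!: tendsto_eq_intros intro: tendsto_within_subset)
    show "((ereal \<circ> (\<lambda>x. x\<^sup>2) \<circ> real_of_ereal) \<longlongrightarrow> \<infinity>) (at_left \<infinity>)"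
      unfolding comp_assoc[symmetric] ereal_tendsto_simps
      by (rule filterlim_pow_at_top) (auto intro: filterlim_ident)
  qed (simp_all add: einterval_0_infinity int set_integrable_substitution_square[OF cont int])
  then show "(LINT t:{0<..}|lborel. (2 * t) *\<^sub>R f (t\<^sup>2)) = (LINT u:{0<..}|lborel. f u)"
    unfolding interval_lebesgue_integral_def einterval_0_infinity by simp
qed

lemma
  fixes b :: complex
  assumes b0: "0 < Re b" and b1: "Re b < 1"
  shows set_integrable_powr_div_one_plus:
      "set_integrable lborel {0<..} (\<lambda>u. of_real u powr (b - 1) / of_real (1 + u))"
    and set_integral_powr_div_one_plus:
      "(LINT u:{0<..}|lborel. of_real u powr (b - 1) / of_real (1 + u)) = of_real pi / sin (of_real pi * b)"
proof -
  define f where "f r u = of_real u powr (b - 1) * of_real (exp (- (r * u)) * exp (- r))" for r u :: real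
  have meas: "(\<lambda>(r, u). indicator ({0<..} \<times> {0<..}) (r, u) *\<^sub>R f r u) \<in> borel_measurable (lborel \<Otimes>\<^sub>M lborel)"
    unfolding f_def by measurable
  have integral_u: "(LINT u:{0<..}|lborel. f r u) = Gamma b * (of_real r powr ((1 - b) - 1) * of_real (exp (- (1 * r))))"
    if "0 < r" for r
  proof -
    have "(LINT u:{0<..}|lborel. f r u) = Gamma b / of_real r powr b * of_real (exp (- r))"
      unfolding f_def of_real_mult mult.assoc[symmetric] set_integral_mult_left
        set_integral_Gamma_scaled[OF b0 that] ..
    then show ?thesis
      by (simp add: powr_minus divide_inverse)
  qed
  have norm_integral_u: "(LBINT u:{0<..}. norm (f r u)) = Gamma (Re b) * (r powr ((1 - Re b) - 1) * exp (- (1 * r)))"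
    if "0 < r" for r
  proof -
    have "(LBINT u:{0<..}. norm (f r u)) = (LBINT u:{0<..}. u powr (Re b - 1) * exp (- (r * u)) * exp (- r))"
      by (rule set_lebesgue_integral_cong) (auto simp: f_def norm_mult norm_of_real_powr)
    also have "\<dots> = Gamma (Re b) * (r powr ((1 - Re b) - 1) * exp (- (1 * r)))"
      using set_integral_Gamma_scaled_real[OF b0 that] that by (simp add: powr_minus divide_inverse)
    finally show ?thesis .
  qed
  have integral_r: "(LINT r:{0<..}|lborel. f r u) = of_real u powr (b - 1) / of_real (1 + u)" if "0 < u" for u
  proof -
    have "exp (- (r * u)) * exp (- r) = exp (- ((1 + u) * r))" for r
      by (simp add: mult_exp_exp algebra_simps)
    then show ?thesis
      using set_integral_exp_neg[of "1 + u"] that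
      by (simp add: f_def set_integral_complex_of_real divide_inverse)
  qed
  have inner: "set_integrable lborel {0<..} (f r)" if "r \<in> {0<..}" for r
    using set_integrable_Gamma_scaled[OF b0, of r] that
    unfolding f_def of_real_mult mult.assoc[symmetric] by (intro set_integrable_mult_left) auto
  have "set_integrable lborel {0<..} (\<lambda>r. Gamma (Re b) * (r powr ((1 - Re b) - 1) * exp (- (1 * r))))"
    using set_integrable_Gamma_scaled_real[of "1 - Re b" 1] b1 by simp
  then have outer: "set_integrable lborel {0<..} (\<lambda>r. LBINT u:{0<..}. norm (f r u))"
    by (rule set_integrable_cong[THEN iffD1, OF refl refl, rotated]) (simp add: norm_integral_u)
  have "set_integrable lborel {0<..} (\<lambda>u. LINT r:{0<..}|lborel. f r u)"
    by (rule Fubini_set_integrable_snd[OF meas inner outer])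
  then show "set_integrable lborel {0<..} (\<lambda>u. of_real u powr (b - 1) / of_real (1 + u))"
    by (rule set_integrable_cong[THEN iffD1, OF refl refl, rotated]) (simp add: integral_r)
  have "(LINT u:{0<..}|lborel. of_real u powr (b - 1) / of_real (1 + u)) = (LINT u:{0<..}|lborel. LINT r:{0<..}|lborel. f r u)"
    by (rule set_lebesgue_integral_cong) (auto simp: integral_r)
  also have "\<dots> = (LINT r:{0<..}|lborel. LINT u:{0<..}|lborel. f r u)"
    by (rule Fubini_set_integral[OF meas inner outer])
  also have "\<dots> = (LINT r:{0<..}|lborel. Gamma b * (of_real r powr ((1 - b) - 1) * of_real (exp (- (1 * r)))))"
    by (rule set_lebesgue_integral_cong) (auto simp: integral_u)
  also have "\<dots> = Gamma b * Gamma (1 - b)"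
    using set_integral_Gamma_scaled[of "1 - b" 1] b1 by simp
  also have "\<dots> = of_real pi / sin (of_real pi * b)"
    by (rule Gamma_reflection_complex)
  finally show "(LINT u:{0<..}|lborel. of_real u powr (b - 1) / of_real (1 + u)) = of_real pi / sin (of_real pi * b)" .
qed

lemma
  fixes a :: complex
  assumes a0: "0 < Re a" and a2: "Re a < 2"
  shows set_integrable_powr_div_one_plus_square:
      "set_integrable lborel {0<..} (\<lambda>t. of_real t powr (a - 1) / of_real (1 + t\<^sup>2))"
    and set_integral_powr_div_one_plus_square:
      "(LINT t:{0<..}|lborel. of_real t powr (a - 1) / of_real (1 + t\<^sup>2)) = of_real pi / (2 * sin (of_real pi * a / 2))"
proof -
  define f where "f = (\<lambda>u::real. of_real u powr (a / 2 - 1) / complex_of_real (1 + u))"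
  have b: "0 < Re (a / 2)" "Re (a / 2) < 1"
    using a0 a2 by auto
  have cont: "continuous_on {0<..} f"
    unfolding f_def by (intro continuous_intros) (auto simp: complex_nonpos_Reals_iff complex_eq_iff)
  have int: "set_integrable lborel {0<..} f"
    using set_integrable_powr_div_one_plus[OF b] by (simp add: f_def)
  have square: "(2 * t) *\<^sub>R f (t\<^sup>2) = 2 * (of_real t powr (a - 1) / of_real (1 + t\<^sup>2))" if "0 < t" for t
  proof -
    have exponent: "(a / 2 - 1) + (a / 2 - 1) = (a - 1) - 1"
      by (simp add: field_simps)
    have "of_real (t\<^sup>2) powr (a / 2 - 1) = of_real t powr (a / 2 - 1) * of_real t powr (a / 2 - 1)"
      using that by (simp add: power2_eq_square powr_times_real)
    also have "\<dots> = of_real t powr (a - 1) / of_real t"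
      by (simp only: powr_add[symmetric] exponent) (simp only: powr_diff powr_to_1)
    finally show ?thesis
      using that by (simp add: f_def scaleR_conv_of_real field_simps del: of_real_add of_real_power)
  qed
  have "set_integrable lborel {0<..} (\<lambda>t. 2 * (of_real t powr (a - 1) / of_real (1 + t\<^sup>2)))"
    using set_integrable_substitution_square[OF cont int]
    by (rule set_integrable_cong[THEN iffD1, OF refl refl, rotated]) (simp add: square)
  then show "set_integrable lborel {0<..} (\<lambda>t. of_real t powr (a - 1) / of_real (1 + t\<^sup>2))"
    by (subst (asm) set_integrable_mult_right_iff) simp_all
  have "2 * (LINT t:{0<..}|lborel. of_real t powr (a - 1) / of_real (1 + t\<^sup>2))
      = (LINT t:{0<..}|lborel. 2 * (of_real t powr (a - 1) / of_real (1 + t\<^sup>2)))"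
    by (rule set_integral_mult_right[symmetric])
  also have "\<dots> = (LINT t:{0<..}|lborel. (2 * t) *\<^sub>R f (t\<^sup>2))"
    by (rule set_lebesgue_integral_cong) (simp_all add: square)
  also have "\<dots> = of_real pi / sin (of_real pi * (a / 2))"
    using set_integral_substitution_square[OF cont int] set_integral_powr_div_one_plus[OF b]
    by (simp add: f_def)
  finally have "(LINT t:{0<..}|lborel. of_real t powr (a - 1) / of_real (1 + t\<^sup>2))
      = of_real pi / sin (of_real pi * (a / 2)) / 2"
    by (auto simp: eq_divide_eq mult_ac split: if_splits)
  then show "(LINT t:{0<..}|lborel. of_real t powr (a - 1) / of_real (1 + t\<^sup>2)) = of_real pi / (2 * sin (of_real pi * a / 2))"
    by (simp add: divide_divide_eq_left mult.commute)
qed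

section \<open>The Mellin transform of Xi\<close>

lemma set_integrable_norm_Xi_integrand:
  fixes s :: complex
  assumes s1: "-1 < Re s" and s0: "Re s < 0"
  shows "set_integrable lborel {0<..} (\<lambda>t. LBINT z:{0<..}. norm (of_real z powr s * of_real (exp (- z * t) / (1 + t\<^sup>2))))"
proof -
  define f where "f t z = of_real z powr s * of_real (exp (- z * t) / (1 + t\<^sup>2))" for t z :: real
  have f_eq: "f t z = (of_real z powr ((s + 1) - 1) * of_real (exp (- (t * z)))) * (1 / of_real (1 + t\<^sup>2))" for t z
    by (simp add: f_def mult.commute del: of_real_add of_real_power)
  have norm_integral_z: "(LBINT z:{0<..}. norm (f t z)) = Gamma (Re s + 1) * norm (of_real t powr (- s - 1) / of_real (1 + t\<^sup>2))"
    if "0 < t" for t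
  proof -
    have "(LBINT z:{0<..}. norm (f t z)) = (LBINT z:{0<..}. z powr ((Re s + 1) - 1) * exp (- (t * z)) * (1 / (1 + t\<^sup>2)))"
      by (rule set_lebesgue_integral_cong)
        (auto simp: f_eq norm_mult norm_divide norm_of_real_powr simp del: of_real_add of_real_power)
    also have "\<dots> = Gamma (Re s + 1) / t powr (Re s + 1) * (1 / (1 + t\<^sup>2))"
      using set_integral_Gamma_scaled_real[of "Re s + 1" t] s1 that by simp
    also have "\<dots> = Gamma (Re s + 1) * norm (of_real t powr (- s - 1) / of_real (1 + t\<^sup>2))"
    proof -
      have "- Re s - 1 = - (Re s + 1)"
        by simp
      then have "t powr (- Re s - 1) = 1 / t powr (Re s + 1)"
        by (simp only: powr_minus_divide)
      moreover have "0 < 1 + t\<^sup>2"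
        by (simp add: add_pos_nonneg)
      ultimately show ?thesis
        using that by (simp add: norm_divide norm_of_real_powr del: of_real_add of_real_power)
    qed
    finally show ?thesis .
  qed
  have "set_integrable lborel {0<..} (\<lambda>t. Gamma (Re s + 1) * norm (of_real t powr (- s - 1) / of_real (1 + t\<^sup>2)))"
    using set_integrable_norm[OF set_integrable_powr_div_one_plus_square[of "- s"]] s1 s0 by simp
  then show ?thesis
    unfolding f_def[symmetric]
    by (rule set_integrable_cong[THEN iffD1, OF refl refl, rotated]) (simp add: norm_integral_z)
qed

lemma
  fixes s :: complex
  assumes s1: "-1 < Re s" and s0: "Re s < 0"
  shows mellin_abs_conv_Xi: "mellin_abs_conv (\<lambda>z. of_real (Xi z)) s"
    and mellin_Xi: "mellin (\<lambda>z. of_real (Xi z)) s = Kker s"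
proof -
  define f where "f t z = of_real z powr s * of_real (exp (- z * t) / (1 + t\<^sup>2))" for t z :: real
  have meas: "(\<lambda>(t, z). indicator ({0<..} \<times> {0<..}) (t, z) *\<^sub>R f t z) \<in> borel_measurable (lborel \<Otimes>\<^sub>M lborel)"
    unfolding f_def by measurable
  have w: "0 < Re (s + 1)"
    using s1 by simp
  have f_eq: "f t z = (of_real z powr ((s + 1) - 1) * of_real (exp (- (t * z)))) * (1 / of_real (1 + t\<^sup>2))" for t z
    by (simp add: f_def mult.commute del: of_real_add of_real_power)
  have inner: "set_integrable lborel {0<..} (f t)" if "t \<in> {0<..}" for t
    using set_integrable_Gamma_scaled[OF w, of t] that
    unfolding f_eq by (intro set_integrable_mult_left) auto
  have integral_z: "(LINT z:{0<..}|lborel. f t z) = Gamma (s + 1) * (of_real t powr (- s - 1) / of_real (1 + t\<^sup>2))"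
    if "0 < t" for t
  proof -
    have "- s - 1 = - (s + 1)"
      by simp
    then have "of_real t powr (- s - 1) = 1 / of_real t powr (s + 1)"
      by (simp only: powr_minus_divide)
    then show ?thesis
      unfolding f_eq set_integral_mult_left set_integral_Gamma_scaled[OF w that] by simp
  qed
  have outer: "set_integrable lborel {0<..} (\<lambda>t. LBINT z:{0<..}. norm (f t z))"
    using set_integrable_norm_Xi_integrand[OF s1 s0] by (simp add: f_def)
  have integral_t: "(LINT t:{0<..}|lborel. f t z) = of_real z powr (s - 1) * of_real (Xi z)" if "0 < z" for z
  proof -
    have "(LINT t:{0<..}|lborel. f t z) = of_real z powr s * of_real (LBINT t:{0<..}. exp (- z * t) / (1 + t\<^sup>2))"
      unfolding f_def set_integral_mult_right set_integral_complex_of_real ..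
    also have "\<dots> = of_real z powr s / of_real z * of_real (Xi z)"
      using that by (simp add: Xi_def)
    finally show ?thesis
      by (simp add: powr_diff)
  qed
  have "set_integrable lborel {0<..} (\<lambda>z. LINT t:{0<..}|lborel. f t z)"
    by (rule Fubini_set_integrable_snd[OF meas inner outer])
  then show "mellin_abs_conv (\<lambda>z. of_real (Xi z)) s"
    unfolding mellin_abs_conv_def
    by (rule set_integrable_cong[THEN iffD1, OF refl refl, rotated]) (simp add: integral_t)
  have "mellin (\<lambda>z. of_real (Xi z)) s = (LINT z:{0<..}|lborel. LINT t:{0<..}|lborel. f t z)"
    unfolding mellin_def by (rule set_lebesgue_integral_cong) (simp_all add: integral_t)
  also have "\<dots> = (LINT t:{0<..}|lborel. LINT z:{0<..}|lborel. f t z)"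
    by (rule Fubini_set_integral[OF meas inner outer])
  also have "\<dots> = (LINT t:{0<..}|lborel. Gamma (s + 1) * (of_real t powr (- s - 1) / of_real (1 + t\<^sup>2)))"
    by (rule set_lebesgue_integral_cong) (simp_all add: integral_z)
  also have "\<dots> = Gamma (s + 1) * (LINT t:{0<..}|lborel. of_real t powr (- s - 1) / of_real (1 + t\<^sup>2))"
    by (rule set_integral_mult_right)
  also have "\<dots> = Gamma (s + 1) * (of_real pi / (2 * sin (of_real pi * - s / 2)))"
    using set_integral_powr_div_one_plus_square[of "- s"] s1 s0 by simp
  also have "\<dots> = Kker s"
    by (simp add: Kker_def)
  finally show "mellin (\<lambda>z. of_real (Xi z)) s = Kker s" .
qed

section \<open>The kernel on vertical lines\<close>

lemma norm_Gamma_le_Gamma_Re: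
  assumes w: "0 < Re w"
  shows "norm (Gamma w) \<le> Gamma (Re w)"
proof -
  have "norm (Gamma w) = norm (LINT u:{0<..}|lborel. of_real u powr (w - 1) * of_real (exp (- (1 * u))))"
    using set_integral_Gamma_scaled[OF w zero_less_one] by simp
  also have "\<dots> \<le> (LBINT u:{0<..}. norm (of_real u powr (w - 1) * complex_of_real (exp (- (1 * u)))))"
    by (rule set_integral_norm_bound[OF set_integrable_Gamma_scaled[OF w zero_less_one]])
  also have "\<dots> = (LBINT u:{0<..}. u powr (Re w - 1) * exp (- (1 * u)))"
    by (rule set_lebesgue_integral_cong) (auto simp: norm_mult norm_of_real_powr)
  also have "\<dots> = Gamma (Re w)"
    using set_integral_Gamma_scaled_real[of "Re w" 1] w by simp
  finally show ?thesis .
qed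

lemma norm_sin_ge: "\<bar>sin (Re z)\<bar> * exp \<bar>Im z\<bar> / 2 \<le> norm (sin z)"
proof -
  have "exp \<bar>Im z\<bar> \<le> exp (Im z) + exp (- Im z)"
    by (cases "0 \<le> Im z") (simp_all add: add_increasing add_increasing2)
  then have "\<bar>sin (Re z)\<bar> * exp \<bar>Im z\<bar> / 2 \<le> \<bar>Re (sin z)\<bar>"
    by (simp add: Re_sin abs_mult mult_left_mono add_pos_pos)
  also have "\<dots> \<le> norm (sin z)"
    by (rule abs_Re_le_cmod)
  finally show ?thesis .
qed

lemma
  fixes c :: real
  assumes c: "-1 < c" "sin (pi * c / 2) \<noteq> 0"
  shows sin_Kker_line_nonzero: "sin (of_real pi * Complex c t / 2) \<noteq> 0"
    and norm_Kker_line_le: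
      "norm (Kker (Complex c t)) \<le> pi * Gamma (c + 1) / \<bar>sin (pi * c / 2)\<bar> * exp (- (pi / 2 * \<bar>t\<bar>))"
proof -
  define m where "m = \<bar>sin (pi * c / 2)\<bar> * exp (pi / 2 * \<bar>t\<bar>) / 2"
  have m_pos: "0 < m"
    using c by (simp add: m_def)
  have m_le: "m \<le> norm (sin (of_real pi * Complex c t / 2))"
    using norm_sin_ge[of "of_real pi * Complex c t / 2"] by (simp add: m_def abs_mult)
  then show "sin (of_real pi * Complex c t / 2) \<noteq> 0"
    using m_pos by auto
  have "norm (Gamma (Complex c t + 1)) \<le> Gamma (c + 1)"
    using norm_Gamma_le_Gamma_Re[of "Complex c t + 1"] c by simp
  moreover have "0 < Gamma (c + 1)"
    using c by (simp add: Gamma_real_pos)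
  ultimately have "norm (Kker (Complex c t)) \<le> pi / 2 * Gamma (c + 1) / m"
    unfolding Kker_def norm_divide norm_mult norm_minus_cancel using m_pos m_le
    by (intro frac_le mult_left_mono) auto
  also have "\<dots> = pi * Gamma (c + 1) / \<bar>sin (pi * c / 2)\<bar> * exp (- (pi / 2 * \<bar>t\<bar>))"
    by (simp add: m_def exp_minus field_simps)
  finally show "norm (Kker (Complex c t)) \<le> pi * Gamma (c + 1) / \<bar>sin (pi * c / 2)\<bar> * exp (- (pi / 2 * \<bar>t\<bar>))" .
qed

lemma continuous_Kker_line:
  fixes c :: real
  assumes c: "-1 < c" "sin (pi * c / 2) \<noteq> 0"
  shows "continuous_on UNIV (\<lambda>t. Kker (Complex c t))"
proof (rule continuous_at_imp_continuous_on, intro ballI)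
  fix t :: real
  have line: "isCont (\<lambda>t. Complex c t) t"
  proof -
    have "(\<lambda>t. Complex c t) = (\<lambda>t. of_real c + \<i> * of_real t)"
      by (auto simp: complex_eq_iff)
    then show ?thesis
      by (simp add: continuous_intros)
  qed
  have "Complex c t + 1 \<notin> \<int>\<^sub>\<le>\<^sub>0"
    using c by (auto elim!: nonpos_Ints_cases simp: complex_eq_iff)
  then show "isCont (\<lambda>t. Kker (Complex c t)) t"
    unfolding Kker_def
    by (intro continuous_intros isCont_o2[OF line] isCont_Gamma sin_Kker_line_nonzero[OF c]) auto
qed

lemma integrable_exp_neg_abs:
  fixes a :: real
  assumes a: "0 < a"
  shows "integrable lborel (\<lambda>t. exp (- (a * \<bar>t\<bar>)))"
proof -
  define g where "g = (\<lambda>t::real. indicator {0<..} t * exp (- (a * t)))"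
  have g: "integrable lborel g"
    using set_integrable_exp_neg[OF a] by (simp add: g_def set_integrable_def)
  then have sum: "integrable lborel (\<lambda>t. g t + g (0 + (-1) * t))"
    by (intro Bochner_Integration.integrable_add lborel_integrable_real_affine) auto
  have "AE t in lborel. g t + g (0 + (-1) * t) = exp (- (a * \<bar>t\<bar>))"
    using AE_lborel_singleton[of 0] by eventually_elim (auto simp: g_def indicator_def abs_if)
  then show ?thesis
    by (intro integrable_cong_AE_imp[OF sum]) simp_all
qed

lemma integrable_Kker_line:
  fixes c :: real
  assumes c: "-1 < c" "sin (pi * c / 2) \<noteq> 0"
  shows "integrable lborel (\<lambda>t. Kker (Complex c t))"
proof (rule Bochner_Integration.integrable_bound)
  show "integrable lborel (\<lambda>t. pi * Gamma (c + 1) / \<bar>sin (pi * c / 2)\<bar> * exp (- (pi / 2 * \<bar>t\<bar>)))"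
    using integrable_exp_neg_abs[of "pi / 2"] by simp
  show "(\<lambda>t. Kker (Complex c t)) \<in> borel_measurable lborel"
    using continuous_Kker_line[OF c] by (simp add: borel_measurable_continuous_onI)
  have "0 \<le> Gamma (c + 1)"
    using c by (simp add: Gamma_real_pos less_imp_le)
  then show "AE t in lborel. norm (Kker (Complex c t))
      \<le> norm (pi * Gamma (c + 1) / \<bar>sin (pi * c / 2)\<bar> * exp (- (pi / 2 * \<bar>t\<bar>)))"
    using norm_Kker_line_le[OF c] by (intro AE_I2) simp
qed

section \<open>Mellin inversion via Levy's inversion theorem\<close>

lemma continuous_on_integral_dominated:
  fixes f :: "'a::metric_space \<Rightarrow> 'b \<Rightarrow> 'c::{banach,second_countable_topology}"
  assumes meas: "\<And>z. z \<in> S \<Longrightarrow> f z \<in> borel_measurable M"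
    and w: "integrable M w"
    and bound: "\<And>z t. z \<in> S \<Longrightarrow> norm (f z t) \<le> w t"
    and cont: "\<And>t. continuous_on S (\<lambda>z. f z t)"
  shows "continuous_on S (\<lambda>z. \<integral>t. f z t \<partial>M)"
proof (rule continuous_on_sequentiallyI)
  fix u a assume u: "\<forall>n. u n \<in> S" and a: "a \<in> S" and lim: "u \<longlonglongrightarrow> a"
  have "(\<lambda>n. f (u n) t) \<longlonglongrightarrow> f a t" for t
    using cont[of t] u a lim unfolding continuous_on_sequentially comp_def by blast
  then show "(\<lambda>n. \<integral>t. f (u n) t \<partial>M) \<longlonglongrightarrow> \<integral>t. f a t \<partial>M"
    using meas u a bound by (intro integral_dominated_convergence[where w = w] w AE_I2) auto
qed

lemma continuous_eq_0_if_interval_integrals_eq_0: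
  fixes f :: "real \<Rightarrow> complex"
  assumes S: "open S" and cont: "continuous_on S f"
    and zero: "\<And>a b. a \<le> b \<Longrightarrow> {a..b} \<subseteq> S \<Longrightarrow> (LINT x:{a..b}|lborel. f x) = 0"
    and x: "x \<in> S"
  shows "f x = 0"
proof -
  obtain e where e: "0 < e" "ball x e \<subseteq> S"
    using S x by (auto simp: open_contains_ball)
  define a b where "a = x - e / 2" and "b = x + e / 2"
  have "{a..b} \<subseteq> ball x e"
    using e(1) by (auto simp: a_def b_def dist_real_def)
  then have ab: "a < b" "x \<in> {a..b}" "{a..b} \<subseteq> S"
    using e by (auto simp: a_def b_def)
  have cont_ab: "continuous_on {a..u} f" if "u \<in> {a..b}" for u
    using that ab by (intro continuous_on_subset[OF cont]) auto
  have "integral {a..u} f = 0" if "u \<in> {a..b}" for u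
  proof -
    have "{a..u} \<subseteq> {a..b}"
      using that by simp
    then have "{a..u} \<subseteq> S"
      using ab(3) by (rule order_trans)
    then show ?thesis
      using zero[of a u] that set_borel_integral_eq_integral(2)[OF borel_integrable_atLeastAtMost'[OF cont_ab]]
      by simp
  qed
  then have D0: "((\<lambda>u. integral {a..u} f) has_vector_derivative 0) (at x within {a..b})"
    by (rule has_vector_derivative_transform[OF ab(2), where f = "\<lambda>_. 0"]) (auto intro: has_vector_derivative_const)
  have Df: "((\<lambda>u. integral {a..u} f) has_vector_derivative f x) (at x within {a..b})"
    using ab(3) by (intro integral_has_vector_derivative[OF continuous_on_subset[OF cont] ab(2)])
  show "f x = 0"
    using vector_derivative_unique_within_closed_interval[OF ab(1), of x "\<lambda>u. integral {a..u} f"] ab(2) Df D0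
    by (simp add: cbox_interval)
qed

text \<open>The Fourier transform of the indicator of \<open>{a<..b}\<close>, as it appears in Levy's inversion
  formula; at \<open>t = 0\<close> it takes the junk value \<open>0\<close>.\<close>
definition levy_kernel :: "real \<Rightarrow> real \<Rightarrow> real \<Rightarrow> complex" where
  "levy_kernel a b t = (iexp (- (t * a)) - iexp (- (t * b))) / (\<i> * t)"

lemma levy_kernel_measurable [measurable]: "levy_kernel a b \<in> borel_measurable borel"
  unfolding levy_kernel_def by measurable

lemma norm_levy_kernel_le:
  assumes "a \<le> b"
  shows "norm (levy_kernel a b t) \<le> b - a"
proof (cases "t = 0")
  case False
  have "levy_kernel a b t = (iexp ((- t) * b) - iexp ((- t) * a)) / (\<i> * complex_of_real (- t))"
    unfolding levy_kernel_def by (simp add: minus_divide_left)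
  then show ?thesis
    using Levy_Inversion_aux2[of a b "- t"] assms False by simp
qed (simp add: levy_kernel_def assms)

lemma levy_kernel_eq_integral:
  assumes ab: "a \<le> b" and t: "t \<noteq> 0"
  shows "levy_kernel a b t = (LINT z:{exp a..exp b}|lborel. of_real z powr (- 1 - \<i> * of_real t))"
proof -
  define w where "w = - \<i> * of_real t"
  have w: "w \<noteq> 0"
    using t by (simp add: w_def)
  have pos: "0 < z" if "exp a \<le> z" for z
    using that exp_gt_zero[of a] by linarith
  have "(LINT z:{exp a..exp b}|lborel. of_real z powr (w - 1))
      = of_real (exp b) powr w / w - of_real (exp a) powr w / w"
    unfolding set_lebesgue_integral_def
  proof (rule integral_FTC_atLeastAtMost)
    show "exp a \<le> exp b"
      using ab by simp
    show "((\<lambda>z. of_real z powr w / w) has_vector_derivative of_real z powr (w - 1)) (at z within {exp a..exp b})"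
      if "exp a \<le> z" "z \<le> exp b" for z
    proof -
      have "0 < z"
        using pos that by simp
      then have "((\<lambda>u. u powr w / w) has_field_derivative w * of_real z powr (w - 1) / w) (at (of_real z))"
        using w by (intro derivative_eq_intros has_field_derivative_powr) auto
      then show ?thesis
        using w by (auto dest: has_vector_derivative_real_field intro: has_vector_derivative_at_within)
    qed
    show "continuous_on {exp a..exp b} (\<lambda>z. of_real z powr (w - 1))"
      by (intro continuous_intros) (auto simp: complex_nonpos_Reals_iff dest!: pos)
  qed
  also have "\<dots> = levy_kernel a b t"
    using w by (simp add: levy_kernel_def of_real_powr_eq_exp_ln w_def field_simps)
  moreover have "w - 1 = - 1 - \<i> * of_real t"
    by (simp add: w_def)
  ultimately show ?thesis
    by simp
qed

text \<open>The truncation bounds are written with the coercions that occur in the statement of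
  \<open>Levy_Inversion\<close>.\<close>
lemma tendsto_integral_symmetric_interval:
  fixes g :: "real \<Rightarrow> complex"
  assumes g: "integrable lborel g"
  shows "(\<lambda>T::nat. CLBINT t=ereal (real_of_int (- int T))..ereal (real T). g t) \<longlonglongrightarrow> integral\<^sup>L lborel g"
proof -
  have truncate: "(CLBINT t=ereal (real_of_int (- int T))..ereal (real T). g t)
      = (\<integral>t. indicator {- real T<..<real T} t *\<^sub>R g t \<partial>lborel)" for T :: nat
    by (simp add: interval_lebesgue_integral_def set_lebesgue_integral_def)
  have "(\<lambda>T::nat. indicator {- real T<..<real T} t *\<^sub>R g t) \<longlonglongrightarrow> g t" for t
  proof (rule tendsto_eventually)
    obtain N :: nat where "\<bar>t\<bar> < real N"
      using reals_Archimedean2 by blast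
    then show "\<forall>\<^sub>F T in sequentially. indicator {- real T<..<real T} t *\<^sub>R g t = g t"
      unfolding eventually_sequentially
      by (intro exI[of _ N] allI impI) (auto simp: indicator_def)
  qed
  moreover have "norm (indicator {- real T<..<real T} t *\<^sub>R g t) \<le> norm (g t)" for T :: nat and t
    by (simp add: indicator_def)
  ultimately show ?thesis
    unfolding truncate using g
    by (intro integral_dominated_convergence[where w = "\<lambda>t. norm (g t)"] AE_I2) auto
qed

locale mellin_inversion_nonneg =
  fixes f :: "real \<Rightarrow> real" and c :: real
  assumes continuous: "continuous_on {0<..} f"
    and nonneg: "\<And>z. 0 < z \<Longrightarrow> 0 \<le> f z"
    and integrable_line: "set_integrable lborel {0<..} (\<lambda>z. z powr (c - 1) * f z)"
    and mass_pos: "0 < (LBINT z:{0<..}. z powr (c - 1) * f z)"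
    and integrable_mellin: "integrable lborel (\<lambda>t. mellin (\<lambda>z. of_real (f z)) (Complex c t))"
begin

definition mass :: real where
  "mass = (LBINT z:{0<..}. z powr (c - 1) * f z)"

definition dens :: "real \<Rightarrow> real" where
  "dens z = indicator {0<..} z * z powr (c - 1) * f z / mass"

definition log_distr :: "real measure" where
  "log_distr = distr (density lborel (\<lambda>z. ennreal (dens z))) borel ln"

definition mellin_inverse :: "real \<Rightarrow> complex" where
  "mellin_inverse z = (\<integral>t. mellin (\<lambda>z. of_real (f z)) (Complex c t) * of_real z powr (- Complex c t) \<partial>lborel)"

lemma dens_eq: "dens = (\<lambda>z. (indicator {0<..} z *\<^sub>R (z powr (c - 1) * f z)) / mass)"
  by (auto simp: dens_def fun_eq_iff)

lemma indicator_f_measurable [measurable]: "(\<lambda>z. indicator {0<..} z * f z) \<in> borel_measurable borel"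
  using borel_measurable_continuous_on_indicator[OF _ continuous] by simp

lemma dens_measurable [measurable]: "dens \<in> borel_measurable borel"
proof -
  have "dens = (\<lambda>z. (indicator {0<..} z * f z) * z powr (c - 1) / mass)"
    by (auto simp: dens_def fun_eq_iff)
  then show ?thesis
    by simp
qed

lemma dens_nonneg: "0 \<le> dens z"
  using mass_pos nonneg[of z] by (auto simp: dens_def mass_def indicator_def)

lemma integrable_dens: "integrable lborel dens"
  using integrable_line unfolding dens_eq set_integrable_def by simp

lemma integral_dens: "integral\<^sup>L lborel dens = 1"
  using mass_pos unfolding dens_eq by (simp add: mass_def set_lebesgue_integral_def)

lemma real_distribution_log_distr: "real_distribution log_distr"
proof -
  have "prob_space (density lborel (\<lambda>z. ennreal (dens z)))"
  proof (rule prob_spaceI)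
    have "emeasure (density lborel (\<lambda>z. ennreal (dens z))) UNIV = ennreal (integral\<^sup>L lborel dens)"
      using integrable_dens dens_nonneg by (simp add: emeasure_density nn_integral_eq_integral)
    then show "emeasure (density lborel (\<lambda>z. ennreal (dens z))) (space (density lborel (\<lambda>z. ennreal (dens z)))) = 1"
      by (simp add: integral_dens)
  qed
  then show ?thesis
    unfolding log_distr_def real_distribution_def real_distribution_axioms_def
    by (auto intro: prob_space.prob_space_distr)
qed

lemma ln_measurable_density: "ln \<in> measurable (density lborel (\<lambda>z. ennreal (dens z))) borel"
  by (subst measurable_cong_sets[OF sets_density refl]) simp

lemma measure_log_distr:
  assumes A: "A \<in> sets borel"
  shows "measure log_distr A = (\<integral>z. indicator (ln -` A) z * dens z \<partial>lborel)"
proof -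
  have sets: "ln -` A \<in> sets borel"
    using measurable_sets[of ln borel borel A] A by simp
  then have "emeasure (density lborel (\<lambda>z. ennreal (dens z))) (ln -` A)
      = (\<integral>\<^sup>+z. ennreal (indicator (ln -` A) z * dens z) \<partial>lborel)"
    by (subst emeasure_density) (auto intro!: nn_integral_cong simp: indicator_def)
  also have "\<dots> = ennreal (\<integral>z. indicator (ln -` A) z * dens z \<partial>lborel)"
    using integrable_mult_indicator[of "ln -` A" lborel dens] sets integrable_dens dens_nonneg
    by (intro nn_integral_eq_integral) auto
  finally have "emeasure log_distr A = ennreal (\<integral>z. indicator (ln -` A) z * dens z \<partial>lborel)"
    using A by (simp add: log_distr_def emeasure_distr[OF ln_measurable_density])
  moreover have "0 \<le> (\<integral>z. indicator (ln -` A) z * dens z \<partial>lborel)"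
    by (rule Bochner_Integration.integral_nonneg) (simp add: dens_nonneg)
  ultimately show ?thesis
    by (simp add: measure_def)
qed

lemma measure_log_distr_singleton: "measure log_distr {a} = 0"
proof -
  have "AE z in lborel. indicator (ln -` {a}) z * dens z = 0"
    using AE_lborel_singleton[of "exp a"]
    by eventually_elim (auto simp: dens_def indicator_def)
  then show ?thesis
    by (simp add: measure_log_distr integral_eq_zero_AE)
qed

lemma measure_log_distr_interval:
  assumes "a \<le> b"
  shows "measure log_distr {a<..b} = (LBINT z:{exp a..exp b}. z powr (c - 1) * f z) / mass"
proof -
  have "ln -` {a<..b} \<in> sets borel"
    using measurable_sets[of ln borel borel "{a<..b}"] by simp
  moreover have "AE z in lborel. indicator (ln -` {a<..b}) z * dens z = indicator {exp a..exp b} z * dens z"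
    using AE_lborel_singleton[of "exp a"]
  proof eventually_elim
    case (elim z)
    show ?case
    proof (cases "0 < z")
      case True
      then have "a < ln z \<and> ln z \<le> b \<longleftrightarrow> exp a \<le> z \<and> z \<le> exp b"
        using elim by (metis exp_le_cancel_iff exp_less_cancel_iff exp_ln order_le_less)
      then show ?thesis
        by (auto simp: indicator_def)
    qed (simp add: dens_def)
  qed
  ultimately have "measure log_distr {a<..b} = (\<integral>z. indicator {exp a..exp b} z * dens z \<partial>lborel)"
    by (simp add: measure_log_distr integral_cong_AE)
  also have "\<dots> = (\<integral>z. indicator {exp a..exp b} z *\<^sub>R (z powr (c - 1) * f z) / mass \<partial>lborel)"
  proof (rule Bochner_Integration.integral_cong[OF refl])
    fix z
    have "exp a \<le> z \<Longrightarrow> 0 < z"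
      using exp_gt_zero[of a] by linarith
    then show "indicator {exp a..exp b} z * dens z = indicator {exp a..exp b} z *\<^sub>R (z powr (c - 1) * f z) / mass"
      by (auto simp: dens_def indicator_def)
  qed
  finally show ?thesis
    by (simp add: set_lebesgue_integral_def)
qed

lemma char_log_distr: "char log_distr t = mellin (\<lambda>z. of_real (f z)) (Complex c t) / mass"
proof -
  have "char log_distr t = (CLINT z|density lborel (\<lambda>z. ennreal (dens z)). iexp (t * ln z))"
    unfolding char_def log_distr_def by (rule integral_distr) measurable
  also have "\<dots> = (CLINT z|lborel. dens z *\<^sub>R iexp (t * ln z))"
    by (rule integral_density) (auto simp: dens_nonneg)
  also have "\<dots> = (CLINT z|lborel. indicator {0<..} z *\<^sub>R (of_real z powr (Complex c t - 1) * of_real (f z)) / of_real mass)"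
  proof (rule Bochner_Integration.integral_cong[OF refl])
    fix z :: real
    show "dens z *\<^sub>R iexp (t * ln z) = indicator {0<..} z *\<^sub>R (of_real z powr (Complex c t - 1) * of_real (f z)) / of_real mass"
    proof (cases "0 < z")
      case True
      have "Complex c t - 1 = of_real (c - 1) + \<i> * of_real t"
        by (simp add: complex_eq_iff)
      then have "of_real z powr (Complex c t - 1) = of_real z powr of_real (c - 1) * of_real z powr (\<i> * of_real t)"
        by (simp only: powr_add)
      also have "\<dots> = complex_of_real (z powr (c - 1)) * iexp (t * ln z)"
        using True powr_of_real[of z "c - 1"] of_real_powr_eq_exp_ln[of z "\<i> * of_real t"]
        by (simp add: mult_ac)
      finally show ?thesis
        using True by (simp add: dens_def scaleR_conv_of_real)
    qed (simp add: dens_def)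
  qed
  also have "\<dots> = mellin (\<lambda>z. of_real (f z)) (Complex c t) / mass"
    by (simp add: mellin_def set_lebesgue_integral_def)
  finally show ?thesis .
qed

lemma mass_gt_0: "0 < mass"
  using mass_pos by (simp add: mass_def)

lemma mellin_line_measurable [measurable]:
  "(\<lambda>t. mellin (\<lambda>z. of_real (f z)) (Complex c t)) \<in> borel_measurable borel"
  using borel_measurable_integrable[OF integrable_mellin] by simp

lemma measure_log_distr_eq_levy:
  assumes ab: "a \<le> b"
  shows "complex_of_real (measure log_distr {a<..b})
    = (\<integral>t. levy_kernel a b t * mellin (\<lambda>z. of_real (f z)) (Complex c t) \<partial>lborel) / of_real (2 * pi * mass)"
proof -
  interpret real_distribution log_distr
    by (rule real_distribution_log_distr)
  define g where "g = (\<lambda>t. levy_kernel a b t * char log_distr t)"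
  have "integrable lborel g"
  proof (rule Bochner_Integration.integrable_bound)
    show "integrable lborel (\<lambda>t. (b - a) * norm (mellin (\<lambda>z. of_real (f z)) (Complex c t) / mass))"
      using integrable_mellin by (intro integrable_mult_right integrable_norm integrable_divide)
    have "norm (g t) \<le> (b - a) * norm (mellin (\<lambda>z. of_real (f z)) (Complex c t) / mass)" for t
      unfolding g_def char_log_distr norm_mult
      by (rule mult_right_mono[OF norm_levy_kernel_le[OF ab]]) simp
    then show "AE t in lborel. norm (g t) \<le> norm ((b - a) * norm (mellin (\<lambda>z. of_real (f z)) (Complex c t) / mass))"
      using ab by (intro AE_I2) simp
    show "g \<in> borel_measurable lborel"
      unfolding g_def char_log_distr by measurable
  qed
  then have "(\<lambda>T::nat. complex_of_real (1 / (2 * pi)) * (CLBINT t=ereal (real_of_int (- int T))..ereal (real T). g t))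
      \<longlonglongrightarrow> complex_of_real (1 / (2 * pi)) * integral\<^sup>L lborel g"
    by (intro tendsto_mult tendsto_const tendsto_integral_symmetric_interval)
  moreover have "(\<lambda>T::nat. complex_of_real (1 / (2 * pi)) * (CLBINT t=ereal (real_of_int (- int T))..ereal (real T). g t))
      \<longlonglongrightarrow> complex_of_real (measure log_distr {a<..b})"
    using Levy_Inversion[OF ab measure_log_distr_singleton measure_log_distr_singleton]
    unfolding g_def levy_kernel_def .
  ultimately have "complex_of_real (measure log_distr {a<..b}) = complex_of_real (1 / (2 * pi)) * integral\<^sup>L lborel g"
    by (rule LIMSEQ_unique[rotated])
  moreover have "integral\<^sup>L lborel g = (\<integral>t. levy_kernel a b t * mellin (\<lambda>z. of_real (f z)) (Complex c t) \<partial>lborel) / mass"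
    by (simp add: g_def char_log_distr)
  ultimately show ?thesis
    using mass_gt_0 by (simp add: field_simps)
qed

lemma integral_levy_kernel_mellin:
  assumes ab: "a \<le> b"
  shows "(\<integral>t. levy_kernel a b t * mellin (\<lambda>z. of_real (f z)) (Complex c t) \<partial>lborel)
    = (LINT z:{exp a..exp b}|lborel. of_real (z powr (c - 1)) * mellin_inverse z)"
proof -
  define h where "h t z = mellin (\<lambda>z. of_real (f z)) (Complex c t) * of_real z powr (- 1 - \<i> * of_real t)" for t z
  have pos: "0 < z" if "exp a \<le> z" for z
    using that exp_gt_zero[of a] by linarith
  have meas: "(\<lambda>(t, z). indicator (UNIV \<times> {exp a..exp b}) (t, z) *\<^sub>R h t z) \<in> borel_measurable (lborel \<Otimes>\<^sub>M lborel)"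
    unfolding h_def by measurable
  have inner: "set_integrable lborel {exp a..exp b} (h t)" for t
    unfolding h_def
    by (intro borel_integrable_atLeastAtMost' continuous_intros) (auto simp: complex_nonpos_Reals_iff dest!: pos)
  have norm_h: "(LBINT z:{exp a..exp b}. norm (h t z))
      = norm (mellin (\<lambda>z. of_real (f z)) (Complex c t)) * (LBINT z:{exp a..exp b}. z powr - 1)" for t
  proof -
    have "(LBINT z:{exp a..exp b}. norm (h t z))
        = (LBINT z:{exp a..exp b}. norm (mellin (\<lambda>z. of_real (f z)) (Complex c t)) * z powr - 1)"
      by (rule set_lebesgue_integral_cong) (auto simp: h_def norm_mult norm_of_real_powr dest!: pos)
    also have "\<dots> = norm (mellin (\<lambda>z. of_real (f z)) (Complex c t)) * (LBINT z:{exp a..exp b}. z powr - 1)"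
      by (rule set_integral_mult_right)
    finally show ?thesis .
  qed
  have outer: "set_integrable lborel UNIV (\<lambda>t. LBINT z:{exp a..exp b}. norm (h t z))"
    using integrable_mellin by (simp add: norm_h set_integrable_def)
  have integral_z: "(LINT z:{exp a..exp b}|lborel. h t z) = levy_kernel a b t * mellin (\<lambda>z. of_real (f z)) (Complex c t)"
    if "t \<noteq> 0" for t
    by (simp add: h_def levy_kernel_eq_integral[OF ab that] mult.commute)
  have integral_t: "(LINT t:UNIV|lborel. h t z) = of_real (z powr (c - 1)) * mellin_inverse z"
    if "z \<in> {exp a..exp b}" for z
  proof -
    have "0 \<le> z"
      using pos that by force
    have powr_eq: "of_real (z powr (c - 1)) * of_real z powr (- Complex c t) = of_real z powr (- 1 - \<i> * of_real t)" for t
    proof -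
      have "of_real (z powr (c - 1)) * of_real z powr (- Complex c t)
          = of_real z powr (of_real (c - 1) + - Complex c t)"
        using \<open>0 \<le> z\<close> by (simp only: powr_add powr_of_real)
      also have "of_real (c - 1) + - Complex c t = - 1 - \<i> * of_real t"
        by (simp add: complex_eq_iff)
      finally show ?thesis .
    qed
    have "h t z = of_real (z powr (c - 1)) * (mellin (\<lambda>z. of_real (f z)) (Complex c t) * of_real z powr (- Complex c t))" for t
      unfolding h_def powr_eq[symmetric] by (simp only: mult_ac)
    then show ?thesis
      by (simp add: mellin_inverse_def set_lebesgue_integral_def)
  qed
  have "(\<integral>t. levy_kernel a b t * mellin (\<lambda>z. of_real (f z)) (Complex c t) \<partial>lborel)
      = (LINT t:UNIV|lborel. LINT z:{exp a..exp b}|lborel. h t z)"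
    unfolding set_lebesgue_integral_def[of _ UNIV]
  proof (rule integral_cong_AE)
    show "(\<lambda>t. indicator UNIV t *\<^sub>R (LINT z:{exp a..exp b}|lborel. h t z)) \<in> borel_measurable lborel"
      using Fubini_set_integrable_fst[OF meas inner outer] unfolding set_integrable_def
      by (rule borel_measurable_integrable)
    show "AE t in lborel. levy_kernel a b t * mellin (\<lambda>z. of_real (f z)) (Complex c t)
        = indicator UNIV t *\<^sub>R (LINT z:{exp a..exp b}|lborel. h t z)"
      using AE_lborel_singleton[of 0] by eventually_elim (simp add: integral_z)
  qed measurable
  also have "\<dots> = (LINT z:{exp a..exp b}|lborel. LINT t:UNIV|lborel. h t z)"
    by (rule Fubini_set_integral[OF meas inner outer, symmetric])
  also have "\<dots> = (LINT z:{exp a..exp b}|lborel. of_real (z powr (c - 1)) * mellin_inverse z)"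
    by (rule set_lebesgue_integral_cong) (simp_all add: integral_t)
  finally show ?thesis .
qed

lemma continuous_mellin_inverse: "continuous_on {0<..} mellin_inverse"
proof (rule continuous_at_imp_continuous_on, intro ballI)
  fix z0 :: real
  assume "z0 \<in> {0<..}"
  then have ab: "0 < z0 / 2" "z0 / 2 < z0" "z0 < 2 * z0"
    by auto
  define w where "w t = norm (mellin (\<lambda>z. of_real (f z)) (Complex c t)) * ((z0 / 2) powr - c + (2 * z0) powr - c)" for t
  have "continuous_on {z0 / 2<..<2 * z0} mellin_inverse"
    unfolding mellin_inverse_def
  proof (rule continuous_on_integral_dominated[where w = w])
    show "integrable lborel w"
      unfolding w_def using integrable_mellin by (intro integrable_mult_left integrable_norm)
    show "norm (mellin (\<lambda>z. of_real (f z)) (Complex c t) * of_real z powr - Complex c t) \<le> w t"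
      if "z \<in> {z0 / 2<..<2 * z0}" for z t
      using that ab powr_le_add_powr_endpoints[of "z0 / 2" z "2 * z0" "- c"]
      by (auto simp: w_def norm_mult norm_of_real_powr intro!: mult_left_mono)
    show "continuous_on {z0 / 2<..<2 * z0} (\<lambda>z. mellin (\<lambda>z. of_real (f z)) (Complex c t) * of_real z powr - Complex c t)" for t
      using ab by (intro continuous_intros) (auto simp: complex_nonpos_Reals_iff)
  qed measurable
  then show "isCont mellin_inverse z0"
    using ab by (subst (asm) continuous_on_eq_continuous_at) auto
qed

theorem mellin_inverse_eq:
  assumes z: "0 < z"
  shows "mellin_inverse z = of_real (2 * pi * f z)"
proof -
  define R where "R z = of_real (z powr (c - 1)) * (of_real (2 * pi * f z) - mellin_inverse z)" for z
  have cont_R: "continuous_on {0<..} R"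
    unfolding R_def using continuous continuous_mellin_inverse by (intro continuous_intros) auto
  have "R z = 0"
  proof (rule continuous_eq_0_if_interval_integrals_eq_0[OF _ cont_R _ ])
    fix A B :: real
    assume AB: "A \<le> B" "{A..B} \<subseteq> {0<..}"
    then have "0 < A"
      by auto
    define a b where "a = ln A" and "b = ln B"
    have ab: "a \<le> b" "exp a = A" "exp b = B"
      using AB \<open>0 < A\<close> by (auto simp: a_def b_def)
    have cont_AB: "continuous_on {A..B} f" "continuous_on {A..B} mellin_inverse"
      using AB by (auto intro: continuous_on_subset[OF continuous] continuous_on_subset[OF continuous_mellin_inverse])
    have "(LINT z:{A..B}|lborel. of_real (z powr (c - 1)) * of_real (2 * pi * f z))
        = (LINT z:{A..B}|lborel. complex_of_real (2 * pi * (z powr (c - 1) * f z)))"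
      by (simp add: mult_ac)
    also have "\<dots> = of_real (2 * pi * (LBINT z:{A..B}. z powr (c - 1) * f z))"
      by (simp only: set_integral_complex_of_real set_integral_mult_right)
    also have "\<dots> = complex_of_real (2 * pi * mass) * of_real (measure log_distr {a<..b})"
      using measure_log_distr_interval[OF ab(1)] mass_pos by (simp add: ab mass_def)
    also have "\<dots> = (LINT z:{A..B}|lborel. of_real (z powr (c - 1)) * mellin_inverse z)"
      using measure_log_distr_eq_levy[OF ab(1)] integral_levy_kernel_mellin[OF ab(1)] mass_gt_0
      by (simp add: ab)
    finally show "(LINT z:{A..B}|lborel. R z) = 0"
      unfolding R_def right_diff_distrib using cont_AB \<open>0 < A\<close>
      by (subst set_integral_diff) (auto intro!: borel_integrable_atLeastAtMost' continuous_intros)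
  qed (use z in auto)
  then show ?thesis
    using z by (simp add: R_def)
qed

lemma vline_integral_mellin_inversion:
  assumes "0 < z"
  shows "vline_integral (\<lambda>s. mellin (\<lambda>z. of_real (f z)) s * of_real z powr - s) c = 2 * pi * \<i> * f z"
  using mellin_inverse_eq[OF assms] by (simp add: vline_integral_def mellin_inverse_def)

end

lemma Xi_nonneg: "0 \<le> z \<Longrightarrow> 0 \<le> Xi z"
  unfolding Xi_def set_lebesgue_integral_def
  by (intro mult_nonneg_nonneg Bochner_Integration.integral_nonneg) auto

lemma continuous_on_Xi: "continuous_on {0<..} Xi"
proof (rule continuous_at_imp_continuous_on, intro ballI)
  fix z0 :: real
  assume "z0 \<in> {0<..}"
  then have a: "0 < z0 / 2" "z0 / 2 < z0"
    by auto
  have "continuous_on {z0 / 2<..} (\<lambda>z. \<integral>t. indicator {0<..} t *\<^sub>R (exp (- z * t) / (1 + t\<^sup>2)) \<partial>lborel)"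
  proof (rule continuous_on_integral_dominated[where w = "\<lambda>t. indicator {0<..} t * exp (- (z0 / 2 * t))"])
    show "integrable lborel (\<lambda>t. indicator {0<..} t * exp (- (z0 / 2 * t)))"
      using set_integrable_exp_neg[OF a(1)] by (simp add: set_integrable_def)
    show "norm (indicator {0<..} t *\<^sub>R (exp (- z * t) / (1 + t\<^sup>2))) \<le> indicator {0<..} t * exp (- (z0 / 2 * t))"
      if "z \<in> {z0 / 2<..}" for z t
    proof (cases "0 < t")
      case True
      have "exp (- z * t) / (1 + t\<^sup>2) \<le> exp (- z * t)"
        by (simp add: divide_le_eq add_pos_nonneg)
      also have "\<dots> \<le> exp (- (z0 / 2 * t))"
        using that True by (simp add: mult_right_mono)
      finally show ?thesis
        using True by simp
    qed simp
    show "continuous_on {z0 / 2<..} (\<lambda>z. indicator {0<..} t *\<^sub>R (exp (- z * t) / (1 + t\<^sup>2)))" for t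
      using add_pos_nonneg[OF zero_less_one zero_le_power2[of t]] by (intro continuous_intros) auto
  qed measurable
  then have "isCont (\<lambda>z. \<integral>t. indicator {0<..} t *\<^sub>R (exp (- z * t) / (1 + t\<^sup>2)) \<partial>lborel) z0"
    using a by (subst (asm) continuous_on_eq_continuous_at) auto
  then show "isCont Xi z0"
    unfolding Xi_def[abs_def] set_lebesgue_integral_def by (intro continuous_intros)
qed

lemma sin_pi_half_neg:
  fixes c :: real
  assumes "-2 < c" "c < 0"
  shows "sin (pi * c / 2) < 0"
proof -
  have "pi * (- c) < pi * 2"
    using assms by (intro mult_strict_left_mono) auto
  then have "0 < sin (- (pi * c / 2))"
    using assms by (intro sin_gt_zero) (auto simp: mult_pos_neg)
  then show ?thesis
    by simp
qed

lemma
  fixes c :: real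
  assumes c: "-1 < c" "c < 0"
  shows set_integrable_powr_Xi: "set_integrable lborel {0<..} (\<lambda>z. z powr (c - 1) * Xi z)"
    and set_integral_powr_Xi: "(LBINT z:{0<..}. z powr (c - 1) * Xi z) = - (pi / 2) * Gamma (c + 1) / sin (pi * c / 2)"
proof -
  have s: "-1 < Re (complex_of_real c)" "Re (complex_of_real c) < 0"
    using c by simp_all
  have of_real_eq: "of_real z powr (of_real c - 1) * complex_of_real (Xi z) = complex_of_real (z powr (c - 1) * Xi z)"
    if "z \<in> {0<..}" for z
    using that powr_of_real[of z "c - 1"] by simp
  show "set_integrable lborel {0<..} (\<lambda>z. z powr (c - 1) * Xi z)"
    using mellin_abs_conv_Xi[OF s] unfolding mellin_abs_conv_def set_integrable_complex_of_real_iff[symmetric]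
    by (rule set_integrable_cong[THEN iffD1, OF refl refl, rotated]) (simp add: of_real_eq)
  have "complex_of_real (LBINT z:{0<..}. z powr (c - 1) * Xi z) = mellin (\<lambda>z. of_real (Xi z)) (of_real c)"
    unfolding mellin_def set_integral_complex_of_real[symmetric]
    by (rule set_lebesgue_integral_cong) (simp_all add: of_real_eq)
  also have "\<dots> = complex_of_real (- (pi / 2) * Gamma (c + 1) / sin (pi * c / 2))"
    using Gamma_complex_of_real[of "c + 1"]
    by (simp add: mellin_Xi[OF s] Kker_def flip: sin_of_real)
  finally show "(LBINT z:{0<..}. z powr (c - 1) * Xi z) = - (pi / 2) * Gamma (c + 1) / sin (pi * c / 2)"
    by (simp only: of_real_eq_iff)
qed

lemma mellin_inversion_nonneg_Xi:
  fixes c :: real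
  assumes c: "-1 < c" "c < 0"
  shows "mellin_inversion_nonneg Xi c"
proof
  have "0 < Gamma (c + 1)"
    using c by (simp add: Gamma_real_pos)
  then show "0 < (LBINT z:{0<..}. z powr (c - 1) * Xi z)"
    using sin_pi_half_neg[of c] c by (simp add: set_integral_powr_Xi divide_pos_neg)
  have "mellin (\<lambda>z. of_real (Xi z)) (Complex c t) = Kker (Complex c t)" for t
    using c by (simp add: mellin_Xi)
  then show "integrable lborel (\<lambda>t. mellin (\<lambda>z. of_real (Xi z)) (Complex c t))"
    using integrable_Kker_line[of c] sin_pi_half_neg[of c] c by simp
qed (use c in \<open>simp_all add: continuous_on_Xi Xi_nonneg set_integrable_powr_Xi\<close>)

lemma vline_integral_Kker_powr:
  fixes c z :: real
  assumes c: "-1 < c" "c < 0" and z: "0 < z"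
  shows "vline_integral (\<lambda>s. Kker s * of_real z powr - s) c = 2 * pi * \<i> * Xi z"
proof -
  interpret mellin_inversion_nonneg Xi c
    by (rule mellin_inversion_nonneg_Xi[OF c])
  have "mellin (\<lambda>z. of_real (Xi z)) (Complex c t) = Kker (Complex c t)" for t
    using c by (simp add: mellin_Xi)
  then show ?thesis
    using vline_integral_mellin_inversion[OF z] by (simp add: vline_integral_def)
qed

section \<open>Exchanging the line integral with the Mellin transform\<close>

lemma set_integrable_if_nn_integral_finite:
  fixes \<Phi> :: "real \<Rightarrow> complex"
  assumes meas: "set_borel_measurable lborel {0<..} \<Phi>"
    and finite: "(\<integral>\<^sup>+ y\<in>{0<..}. ennreal (norm (\<Phi> y) * y powr e) \<partial>lborel) < \<infinity>"
  shows "set_integrable lborel {0<..} (\<lambda>y. norm (\<Phi> y) * y powr e)"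
  unfolding set_integrable_def
proof (rule integrableI_bounded)
  have [measurable]: "(\<lambda>y. indicator {0<..} y *\<^sub>R \<Phi> y) \<in> borel_measurable lborel"
    using meas by (simp add: set_borel_measurable_def)
  have "(\<lambda>y. indicator {0<..} y *\<^sub>R (norm (\<Phi> y) * y powr e)) = (\<lambda>y. norm (indicator {0<..} y *\<^sub>R \<Phi> y) * y powr e)"
    by (auto simp: indicator_def)
  then show "(\<lambda>y. indicator {0<..} y *\<^sub>R (norm (\<Phi> y) * y powr e)) \<in> borel_measurable lborel"
    by (simp only:) measurable
  show "(\<integral>\<^sup>+ y. ennreal (norm (indicator {0<..} y *\<^sub>R (norm (\<Phi> y) * y powr e))) \<partial>lborel) < \<infinity>"
    using finite by (simp add: indicator_mult_ennreal mult.commute abs_mult)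
qed

lemma mellin_abs_conv_if_moment:
  fixes \<Phi> :: "real \<Rightarrow> complex"
  assumes meas: "set_borel_measurable lborel {0<..} \<Phi>"
    and moment: "set_integrable lborel {0<..} (\<lambda>y. norm (\<Phi> y) * y powr (Re s - 1))"
  shows "mellin_abs_conv \<Phi> s"
  unfolding mellin_abs_conv_def
proof (rule set_integrable_bound[OF moment])
  have [measurable]: "(\<lambda>y. indicator {0<..} y *\<^sub>R \<Phi> y) \<in> borel_measurable lborel"
    using meas by (simp add: set_borel_measurable_def)
  have "(\<lambda>y. indicator {0<..} y *\<^sub>R (of_real y powr (s - 1) * \<Phi> y)) = (\<lambda>y. of_real y powr (s - 1) * (indicator {0<..} y *\<^sub>R \<Phi> y))"
    by (auto simp: indicator_def)
  then show "set_borel_measurable lborel {0<..} (\<lambda>y. of_real y powr (s - 1) * \<Phi> y)"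
    unfolding set_borel_measurable_def by (simp only:) measurable
  show "AE y in lborel. y \<in> {0<..} \<longrightarrow> norm (of_real y powr (s - 1) * \<Phi> y) \<le> norm (norm (\<Phi> y) * y powr (Re s - 1))"
    by (intro AE_I2) (simp add: norm_mult norm_of_real_powr)
qed

lemma
  fixes \<Phi> :: "real \<Rightarrow> complex" and k :: "complex \<Rightarrow> complex" and c \<mu> :: real
  assumes meas: "set_borel_measurable lborel {0<..} \<Phi>"
    and k: "integrable lborel (\<lambda>t. k (Complex c t))"
    and moment: "set_integrable lborel {0<..} (\<lambda>y. norm (\<Phi> y) * y powr (- c - 1))"
    and \<mu>: "0 < \<mu>"
  shows vline_integrable_mellin_swap:
      "vline_integrable (\<lambda>s. k s * mellin \<Phi> (- s) * of_real \<mu> powr - s) c"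
    and vline_integral_mellin_swap:
      "vline_integral (\<lambda>s. k s * mellin \<Phi> (- s) * of_real \<mu> powr - s) c
        = (LINT y:{0<..}|lborel. \<Phi> y / of_real y * vline_integral (\<lambda>s. k s * of_real (\<mu> * y) powr - s) c)"
proof -
  have [measurable]: "(\<lambda>y. indicator {0<..} y *\<^sub>R \<Phi> y) \<in> borel_measurable borel"
    using meas by (simp add: set_borel_measurable_def)
  have [measurable]: "(\<lambda>t. k (Complex c t)) \<in> borel_measurable borel"
    using borel_measurable_integrable[OF k] by simp
  define H where "H t y = k (Complex c t) * (of_real y powr (- Complex c t - 1) * \<Phi> y) * of_real \<mu> powr - Complex c t"
    for t y
  have "(\<lambda>(t, y). indicator (UNIV \<times> {0<..}) (t, y) *\<^sub>R H t y)
      = (\<lambda>(t, y). k (Complex c t) * of_real y powr (- Complex c t - 1) * of_real \<mu> powr - Complex c t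
          * (indicator {0<..} y *\<^sub>R \<Phi> y))"
    by (auto simp: H_def indicator_def fun_eq_iff)
  then have H_meas: "(\<lambda>(t, y). indicator (UNIV \<times> {0<..}) (t, y) *\<^sub>R H t y) \<in> borel_measurable (lborel \<Otimes>\<^sub>M lborel)"
    by (simp only:) measurable
  have mellin_line: "mellin_abs_conv \<Phi> (- Complex c t)" for t
    using mellin_abs_conv_if_moment[OF meas] moment by simp
  have inner: "set_integrable lborel {0<..} (H t)" for t
    using mellin_line[of t] unfolding H_def mellin_abs_conv_def
    by (intro set_integrable_mult_left set_integrable_mult_right) (simp add: algebra_simps)
  have norm_H: "(LBINT y:{0<..}. norm (H t y))
      = norm (k (Complex c t)) * \<mu> powr - c * (LBINT y:{0<..}. norm (\<Phi> y) * y powr (- c - 1))" for t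
  proof -
    have "(LBINT y:{0<..}. norm (H t y))
        = (LBINT y:{0<..}. norm (k (Complex c t)) * \<mu> powr - c * (norm (\<Phi> y) * y powr (- c - 1)))"
      using \<mu> by (intro set_lebesgue_integral_cong) (auto simp: H_def norm_mult norm_of_real_powr)
    then show ?thesis
      by (simp only: set_integral_mult_right)
  qed
  have outer: "set_integrable lborel UNIV (\<lambda>t. LBINT y:{0<..}. norm (H t y))"
    using k by (simp add: norm_H set_integrable_def)
  have integral_y: "(LINT y:{0<..}|lborel. H t y) = k (Complex c t) * mellin \<Phi> (- Complex c t) * of_real \<mu> powr - Complex c t" for t
    by (simp add: H_def mellin_def)
  have integral_t: "(LINT t:UNIV|lborel. H t y)
      = \<Phi> y / of_real y * (\<integral>t. k (Complex c t) * of_real (\<mu> * y) powr - Complex c t \<partial>lborel)" if "y \<in> {0<..}" for y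
  proof -
    have "H t y = \<Phi> y / of_real y * (k (Complex c t) * of_real (\<mu> * y) powr - Complex c t)" for t
      using that \<mu> by (simp add: H_def powr_times_real powr_diff field_simps)
    then show ?thesis
      by (simp add: set_lebesgue_integral_def)
  qed
  have "integrable lborel (\<lambda>t. LINT y:{0<..}|lborel. H t y)"
    using Fubini_set_integrable_fst[OF H_meas _ outer] inner by (simp add: set_integrable_def)
  then show "vline_integrable (\<lambda>s. k s * mellin \<Phi> (- s) * of_real \<mu> powr - s) c"
    by (simp add: vline_integrable_def integral_y)
  have "vline_integral (\<lambda>s. k s * mellin \<Phi> (- s) * of_real \<mu> powr - s) c
      = \<i> * (\<integral>t. (LINT y:{0<..}|lborel. H t y) \<partial>lborel)"
    by (simp add: vline_integral_def integral_y)
  also have "\<dots> = \<i> * (LINT t:UNIV|lborel. LINT y:{0<..}|lborel. H t y)"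
    by (simp add: set_lebesgue_integral_def)
  also have "\<dots> = \<i> * (LINT y:{0<..}|lborel. LINT t:UNIV|lborel. H t y)"
    using Fubini_set_integral[OF H_meas _ outer] inner by simp
  also have "\<dots> = (LINT y:{0<..}|lborel. \<i> * (LINT t:UNIV|lborel. H t y))"
    by (rule set_integral_mult_right[symmetric])
  also have "\<dots> = (LINT y:{0<..}|lborel. \<Phi> y / of_real y * vline_integral (\<lambda>s. k s * of_real (\<mu> * y) powr - s) c)"
    by (rule set_lebesgue_integral_cong) (simp_all add: integral_t vline_integral_def mult_ac)
  finally show "vline_integral (\<lambda>s. k s * mellin \<Phi> (- s) * of_real \<mu> powr - s) c
      = (LINT y:{0<..}|lborel. \<Phi> y / of_real y * vline_integral (\<lambda>s. k s * of_real (\<mu> * y) powr - s) c)" .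
qed

theorem theorem1:
  fixes \<Phi> :: "real \<Rightarrow> complex" and c :: real
  assumes meas: "set_borel_measurable lborel {0<..} \<Phi>"
    and c_bounds: "-1 < c" "c < 0"
    and D0_fin: "set_integrable lborel {0<..} (\<lambda>y. \<Phi> y / complex_of_real y)"
    and D0_nz: "D0 \<Phi> \<noteq> 0"
    and mom: "(\<integral>\<^sup>+ y\<in>{0<..}. ennreal (norm (\<Phi> y) * y powr (- c - 1)) \<partial>lborel) < \<infinity>"
  shows "(\<forall>s. Re s = c \<longrightarrow> mellin_abs_conv \<Phi> (- s))
       \<and> (\<forall>\<mu>>0. vline_integrable (\<lambda>s. Kker s * mellin \<Phi> (- s) * (complex_of_real \<mu>) powr (- s)) c)
       \<and> (\<forall>\<mu>>0. Sfun \<Phi> \<mu> =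
             1 / (2 * of_real pi * \<i> * D0 \<Phi>) *
             vline_integral (\<lambda>s. Kker s * mellin \<Phi> (- s) * (complex_of_real \<mu>) powr (- s)) c)"
proof -
  have moment: "set_integrable lborel {0<..} (\<lambda>y. norm (\<Phi> y) * y powr (- c - 1))"
    by (rule set_integrable_if_nn_integral_finite[OF meas mom])
  have K: "integrable lborel (\<lambda>t. Kker (Complex c t))"
    using integrable_Kker_line[of c] sin_pi_half_neg[of c] c_bounds by simp
  have "vline_integral (\<lambda>s. Kker s * mellin \<Phi> (- s) * of_real \<mu> powr - s) c
      = 2 * pi * \<i> * (LINT y:{0<..}|lborel. \<Phi> y / of_real y * of_real (Xi (\<mu> * y)))" if "0 < \<mu>" for \<mu>
  proof -
    have "vline_integral (\<lambda>s. Kker s * mellin \<Phi> (- s) * of_real \<mu> powr - s) c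
        = (LINT y:{0<..}|lborel. \<Phi> y / of_real y * vline_integral (\<lambda>s. Kker s * of_real (\<mu> * y) powr - s) c)"
      by (rule vline_integral_mellin_swap[OF meas K moment that])
    also have "\<dots> = (LINT y:{0<..}|lborel. 2 * pi * \<i> * (\<Phi> y / of_real y * of_real (Xi (\<mu> * y))))"
      using that by (intro set_lebesgue_integral_cong)
        (simp_all add: vline_integral_Kker_powr[OF c_bounds] mult_ac del: of_real_mult)
    also have "\<dots> = 2 * pi * \<i> * (LINT y:{0<..}|lborel. \<Phi> y / of_real y * of_real (Xi (\<mu> * y)))"
      by (rule set_integral_mult_right)
    finally show ?thesis .
  qed
  then show ?thesis
    using mellin_abs_conv_if_moment[OF meas] moment vline_integrable_mellin_swap[OF meas K moment] D0_nz
    by (auto simp: Sfun_def)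
qed

end
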